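(* Let a trained classification model have feature space $\Phi\subseteq\mathbb{R}^f$ and produce logits $z=Wx_\phi+b$ for a feature vector $x_\phi\in\Phi$, where $W\in\mathbb{R}^{n\times f}$, $b\in\mathbb{R}^n$, $n$ the number of classes. Let $x$ be an input whose feature vector $x_\phi$ has distance at most $\delta$ from the closest decision boundary in $\Phi$, i.e. $d^{f,\min}_\phi(x)\le\delta$. Then $$\max\mathrm{softmax}(Wx_\phi+b)\;\le\;\frac{e^{\delta\rho'(W)}}{e^{\delta\rho'(W)}+1},\qquad \rho'(W)=\max_{i\ne j,\ i,j\in\{1,\dots,n\}}\|W[j]-W[i]\|_2.$$
   Context: $W[k]$ denotes the $k$-th row of $W$. The classification of an input is the index of its largest logit. The decision boundary between classes $i$ and $j$ is the set of $y\in\Phi$ with $W[i]y+b[i]=W[j]y+b[j]\ge W[k]y+b[k]$ for all $k\notin\{i,j\}$; $d^{f,\min}_\phi(x)$ is the Euclidean distance from $x_\phi$ to the union of the decision boundaries between the class of $x$ and the other classes. $\mathrm{softmax}(z)[k]=e^{z[k]}/\sum_{l}e^{z[l]}$. *)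

theory Defs
  imports "HOL-Analysis.Analysis"
begin

definition logits :: "real^'f^'n \<Rightarrow> real^'n \<Rightarrow> real^'f \<Rightarrow> real^'n" where
  "logits W b x = W *v x + b"

definition softmax :: "real^'n::finite \<Rightarrow> real^'n" where
  "softmax z = (\<chi> k. exp (z $ k) / (\<Sum>l\<in>UNIV. exp (z $ l)))"

definition is_class :: "real^'f^'n \<Rightarrow> real^'n \<Rightarrow> real^'f \<Rightarrow> 'n \<Rightarrow> bool" where
  "is_class W b x c \<longleftrightarrow> (\<forall>k. logits W b x $ k \<le> logits W b x $ c)"

definition decision_boundary ::
  "(real^'f) set \<Rightarrow> real^'f^'n \<Rightarrow> real^'n \<Rightarrow> 'n \<Rightarrow> 'n \<Rightarrow> (real^'f) set" where
  "decision_boundary Phi W b i j =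
     {y \<in> Phi. (W $ i) \<bullet> y + b $ i = (W $ j) \<bullet> y + b $ j \<and>
        (\<forall>k. k \<noteq> i \<and> k \<noteq> j \<longrightarrow> (W $ k) \<bullet> y + b $ k \<le> (W $ i) \<bullet> y + b $ i)}"

text \<open>Euclidean distance from x_phi to the union of the decision boundaries between
  class c and the other classes (infimum; +infinity if that union is empty).\<close>
definition d_min ::
  "(real^'f) set \<Rightarrow> real^'f^'n \<Rightarrow> real^'n \<Rightarrow> 'n \<Rightarrow> real^'f \<Rightarrow> ereal" where
  "d_min Phi W b c x = (INF y \<in> (\<Union>j\<in>{j. j \<noteq> c}. decision_boundary Phi W b c j). ereal (dist x y))"

definition rho' :: "real^'f^'n::finite \<Rightarrow> real" where
  "rho' W = Max {norm (W $ j - W $ i) | i j. i \<noteq> j}"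

end

theory Submission
  imports Defs
begin

text \<open>On the boundary between c and j the logits of c and j agree, so the logit gap at x
  is the change of the linear form (W c - W j) between the boundary point and x; by
  Cauchy-Schwarz it is at most \<rho>'(W) times the distance to the boundary. Hence some class j
  trails c by at most \<delta> \<rho>'(W), and already the two terms of c and j in the softmax
  denominator bound the top probability by the logistic function at \<delta> \<rho>'(W).\<close>

lemma norm_row_diff_le_rho':
  fixes W :: "real^'f^'n"
  assumes "i \<noteq> j"
  shows "norm (W $ j - W $ i) \<le> rho' W"
proof -
  have "{norm (W $ j - W $ i) | i j. i \<noteq> j} \<subseteq> range (\<lambda>(i, j). norm (W $ j - W $ i))"
    by auto
  then have "finite {norm (W $ j - W $ i) | i j. i \<noteq> j}"
    by (rule finite_subset) simp
  then show ?thesis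
    unfolding rho'_def by (rule Max_ge) (use assms in blast)
qed

lemma rho'_nonneg:
  fixes W :: "real^'f^'n"
  assumes "i \<noteq> (j :: 'n)"
  shows "0 \<le> rho' W"
  using norm_row_diff_le_rho'[OF assms, of W] norm_ge_zero order_trans by blast

lemma logit_gap_le_rho'_dist_boundary:
  fixes W :: "real^'f^'n"
  assumes "y \<in> decision_boundary Phi W b c j" and "j \<noteq> c"
  shows "logits W b x $ c - logits W b x $ j \<le> rho' W * dist x y"
proof -
  have "(W $ c) \<bullet> y + b $ c = (W $ j) \<bullet> y + b $ j"
    using assms(1) unfolding decision_boundary_def by auto
  then have "logits W b x $ c - logits W b x $ j = (W $ c - W $ j) \<bullet> (x - y)"
    unfolding logits_def
    by (simp add: matrix_vector_mul_component inner_diff_left inner_diff_right)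
  also have "\<dots> \<le> norm (W $ c - W $ j) * norm (x - y)"
    by (rule norm_cauchy_schwarz)
  also have "\<dots> \<le> rho' W * dist x y"
    using norm_row_diff_le_rho'[OF assms(2), of W] by (simp add: dist_norm mult_right_mono)
  finally show ?thesis .
qed

lemma le_mult_if_INF_le:
  fixes a r \<delta> :: real and d :: "'a \<Rightarrow> real"
  assumes "0 \<le> r"
    and "\<And>y. y \<in> U \<Longrightarrow> a \<le> r * d y"
    and "(INF y\<in>U. ereal (d y)) \<le> ereal \<delta>"
  shows "a \<le> r * \<delta>"
proof (cases "r = 0")
  case True
  from assms(3) have "U \<noteq> {}"
    by (auto simp: top_ereal_def)
  with True assms(2) show ?thesis by auto
next
  case False
  with assms(1) have "0 < r" by simp
  have "ereal (a / r) \<le> (INF y\<in>U. ereal (d y))"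
    using assms(2) \<open>0 < r\<close> by (intro INF_greatest) (simp add: divide_le_eq mult.commute)
  with assms(3) have "a / r \<le> \<delta>"
    using ereal_less_eq(3) order_trans by blast
  with \<open>0 < r\<close> show ?thesis
    by (simp add: divide_le_eq mult.commute)
qed

lemma logit_gap_le_if_d_min_le:
  fixes W :: "real^'f^'n"
  assumes "d_min Phi W b c x \<le> ereal \<delta>"
  shows "\<exists>j. j \<noteq> c \<and> logits W b x $ c - logits W b x $ j \<le> rho' W * \<delta>"
proof -
  let ?gap = "\<lambda>j. logits W b x $ c - logits W b x $ j"
  let ?U = "\<Union>j\<in>{j. j \<noteq> c}. decision_boundary Phi W b c j"
  have "?U \<noteq> {}"
  proof
    assume "?U = {}"
    with assms show False
      unfolding d_min_def by (simp add: top_ereal_def)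
  qed
  then obtain j0 where "j0 \<noteq> c" by blast
  then obtain j where j: "is_arg_min ?gap (\<lambda>j. j \<in> {j. j \<noteq> c}) j"
    using ex_is_arg_min_if_finite[of "{j. j \<noteq> c}" ?gap] by auto
  then have "j \<noteq> c" and gap_min: "\<And>k. k \<noteq> c \<Longrightarrow> ?gap j \<le> ?gap k"
    unfolding is_arg_min_linorder by auto
  have "?gap j \<le> rho' W * dist x y" if "y \<in> ?U" for y
  proof -
    from that obtain k where "k \<noteq> c" "y \<in> decision_boundary Phi W b c k" by blast
    with gap_min show ?thesis
      using logit_gap_le_rho'_dist_boundary order_trans by blast
  qed
  then have "?gap j \<le> rho' W * \<delta>"
    using le_mult_if_INF_le rho'_nonneg[OF \<open>j \<noteq> c\<close>] assms unfolding d_min_def by blast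
  with \<open>j \<noteq> c\<close> show ?thesis by blast
qed

lemma softmax_le_softmax:
  assumes "z $ k \<le> z $ c"
  shows "softmax z $ k \<le> softmax z $ c"
  unfolding softmax_def using assms
  by (simp add: divide_right_mono sum_nonneg)

lemma softmax_le_logistic:
  fixes z :: "real^'n"
  assumes "j \<noteq> c" and "z $ c - z $ j \<le> t"
  shows "softmax z $ c \<le> exp t / (exp t + 1)"
proof -
  define S where "S = (\<Sum>l\<in>UNIV. exp (z $ l))"
  have "(\<Sum>l\<in>{c, j}. exp (z $ l)) \<le> S"
    unfolding S_def by (rule sum_mono2) auto
  with assms(1) have pair_le_S: "exp (z $ c) + exp (z $ j) \<le> S"
    by simp
  moreover have "0 < exp (z $ c) + exp (z $ j)"
    by (intro add_pos_pos exp_gt_zero)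
  ultimately have "0 < S"
    by linarith
  have "softmax z $ c = exp (z $ c) / S"
    unfolding softmax_def S_def by simp
  also have "\<dots> \<le> exp (z $ c) / (exp (z $ c) + exp (z $ j))"
    using pair_le_S \<open>0 < S\<close> by (intro divide_left_mono) (auto intro!: mult_pos_pos add_pos_pos)
  also have "\<dots> \<le> exp t / (exp t + 1)"
  proof -
    have "exp (z $ c) \<le> exp t * exp (z $ j)"
      using assms(2) by (simp flip: exp_add)
    then show ?thesis
      by (simp add: divide_simps add_pos_pos algebra_simps)
  qed
  finally show ?thesis .
qed

theorem theorem2:
  fixes Phi :: "(real^'f) set" and W :: "real^'f^'n" and b :: "real^'n"
    and x :: "real^'f" and c :: 'n and \<delta> :: real
  assumes "x \<in> Phi"
    and "is_class W b x c"
    and "d_min Phi W b c x \<le> ereal \<delta>"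
  shows "Max (range (\<lambda>k. softmax (logits W b x) $ k))
           \<le> exp (\<delta> * rho' W) / (exp (\<delta> * rho' W) + 1)"
proof -
  let ?z = "logits W b x"
  obtain j where "j \<noteq> c" "?z $ c - ?z $ j \<le> \<delta> * rho' W"
    using logit_gap_le_if_d_min_le[OF assms(3)] by (auto simp: mult.commute)
  then have "softmax ?z $ c \<le> exp (\<delta> * rho' W) / (exp (\<delta> * rho' W) + 1)"
    by (rule softmax_le_logistic)
  moreover have "softmax ?z $ k \<le> softmax ?z $ c" for k
    using assms(2) unfolding is_class_def by (intro softmax_le_softmax) blast
  ultimately show ?thesis
    by (auto intro: order_trans)
qed

end
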